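(* For $k\in\mathbb{N}\cup\{0\}$ let $W_k,Z_k$ be Banach spaces such that (i) $Z_k$ is compactly embedded in $W_k$, and (ii) for each $\varepsilon>0$, $\kappa_\varepsilon=\sup_{k\ge0}\mathcal{N}_\varepsilon(B_{Z_k},W_k)<\infty$. Let $\mathcal{B}_k\subset W_k$ be sets and $U^k:\mathcal{B}_k\to\mathcal{B}_{k-1}$ ($k\ge1$) maps such that (iii) each $\mathcal{B}_k$ is compact in $W_k$; (iv) $\sup_{k\ge0}\|\mathcal{B}_k\|_{W_k}=Q_1<\infty$; (v) $U^k(\mathcal{B}_k)=\mathcal{B}_{k-1}$; (vi) there is a decomposition $U^k(z)=P^k(z)+N^k(z)$ and constants $0<\varrho<\frac14$, $Q_2>0$ such that for all $z^1,z^2\in\mathcal{B}_k$, $$\|P^k(z^1)-P^k(z^2)\|_{W_{k-1}}\le\varrho\|z^1-z^2\|_{W_k},\qquad \|N^k(z^1)-N^k(z^2)\|_{Z_{k-1}}\le Q_2\|z^1-z^2\|_{W_k}.$$ Then $$\dim_{W_0}\mathcal{B}_0\le\frac{\log_2\kappa_{\varrho Q_2^{-1}}}{\log_2\frac{1}{4\varrho}}.$$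
   Context: For a Banach space $W$, $B_W$ denotes its closed unit ball and $B_W(\varepsilon,x)=x+\varepsilon B_W$. For $K\subset W$ (relatively) compact, $\mathcal{N}_\varepsilon(K,W)$ is the minimal number of $\varepsilon$-balls of $W$ covering $K$; here $B_{Z_k}$ is regarded as a subset of $W_k$. The fractal dimension of a compact $K\subset W$ is $\dim_WK=\limsup_{\varepsilon\to0^+}\frac{\log\mathcal{N}_\varepsilon(K,W)}{\log(1/\varepsilon)}$. $\|D\|_W=\sup_{z\in D}\|z\|_W$. In (vi), $P^k,N^k$ map $\mathcal{B}_k$ into $W_{k-1}$, and the differences $N^k(z^1)-N^k(z^2)$ lie in $Z_{k-1}$. *)

theory Defs
  imports "HOL-Analysis.Analysis"
begin

text \<open>A family of Banach spaces of possibly different kinds is modelled as a family of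
  linear subspaces of one ambient real vector space, each carrying its own norm function.\<close>

definition normed_subspace :: "'a::real_vector set \<Rightarrow> ('a \<Rightarrow> real) \<Rightarrow> bool" where
  "normed_subspace V n \<longleftrightarrow> subspace V \<and> (\<forall>x\<in>V. 0 \<le> n x) \<and> (\<forall>x\<in>V. n x = 0 \<longleftrightarrow> x = 0)
     \<and> (\<forall>x\<in>V. \<forall>c. n (c *\<^sub>R x) = \<bar>c\<bar> * n x) \<and> (\<forall>x\<in>V. \<forall>y\<in>V. n (x + y) \<le> n x + n y)"

definition conv_in :: "'a::real_vector set \<Rightarrow> ('a \<Rightarrow> real) \<Rightarrow> (nat \<Rightarrow> 'a) \<Rightarrow> 'a \<Rightarrow> bool" where
  "conv_in V n x l \<longleftrightarrow> l \<in> V \<and> (\<forall>e>0. \<exists>M. \<forall>m\<ge>M. n (x m - l) < e)"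

definition banach_space :: "'a::real_vector set \<Rightarrow> ('a \<Rightarrow> real) \<Rightarrow> bool" where
  "banach_space V n \<longleftrightarrow> normed_subspace V n \<and>
     (\<forall>x::nat \<Rightarrow> 'a. (\<forall>m. x m \<in> V) \<and> (\<forall>e>0. \<exists>M. \<forall>m\<ge>M. \<forall>p\<ge>M. n (x m - x p) < e) \<longrightarrow> (\<exists>l. conv_in V n x l))"

definition ns_compact :: "'a::real_vector set \<Rightarrow> ('a \<Rightarrow> real) \<Rightarrow> 'a set \<Rightarrow> bool" where
  "ns_compact V n K \<longleftrightarrow> K \<subseteq> V \<and>
     (\<forall>x::nat \<Rightarrow> 'a. (\<forall>m. x m \<in> K) \<longrightarrow> (\<exists>r l. strict_mono r \<and> l \<in> K \<and> conv_in V n (x \<circ> r) l))"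

definition ns_rel_compact :: "'a::real_vector set \<Rightarrow> ('a \<Rightarrow> real) \<Rightarrow> 'a set \<Rightarrow> bool" where
  "ns_rel_compact V n K \<longleftrightarrow> K \<subseteq> V \<and>
     (\<forall>x::nat \<Rightarrow> 'a. (\<forall>m. x m \<in> K) \<longrightarrow> (\<exists>r l. strict_mono r \<and> conv_in V n (x \<circ> r) l))"

definition compactly_embedded ::
  "'a::real_vector set \<Rightarrow> ('a \<Rightarrow> real) \<Rightarrow> 'a set \<Rightarrow> ('a \<Rightarrow> real) \<Rightarrow> bool" where
  "compactly_embedded Z nZ W nW \<longleftrightarrow> Z \<subseteq> W \<and> (\<exists>C. \<forall>z\<in>Z. nW z \<le> C * nZ z)
     \<and> ns_rel_compact W nW {z\<in>Z. nZ z \<le> 1}"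

definition unit_ball :: "'a::real_vector set \<Rightarrow> ('a \<Rightarrow> real) \<Rightarrow> 'a set" where
  "unit_ball V n = {x\<in>V. n x \<le> 1}"

definition covering_number :: "'a::real_vector set \<Rightarrow> ('a \<Rightarrow> real) \<Rightarrow> real \<Rightarrow> 'a set \<Rightarrow> nat" where
  "covering_number V n eps K =
     Inf {card C | C. finite C \<and> C \<subseteq> V \<and> K \<subseteq> (\<Union>c\<in>C. {x\<in>V. n (x - c) \<le> eps})}"

definition set_norm :: "('a \<Rightarrow> real) \<Rightarrow> 'a set \<Rightarrow> real" where
  "set_norm n D = (SUP z\<in>D. n z)"

definition fractal_dim :: "'a::real_vector set \<Rightarrow> ('a \<Rightarrow> real) \<Rightarrow> 'a set \<Rightarrow> ereal" where
  "fractal_dim V n K =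
     Limsup (at_right 0) (\<lambda>e. ereal (ln (real (covering_number V n e K)) / ln (1 / e)))"

end

theory Submission
  imports Defs
begin

text \<open>Let \<open>\<kappa>\<close> bound the number of \<open>W\<^sub>k\<close>-balls of radius \<open>\<rho>/Q\<^sub>2\<close> needed to cover the unit
  ball of \<open>Z\<^sub>k\<close>, and cover \<open>B\<^sub>k\<^sub>+\<^sub>1\<close> by \<open>\<kappa>\<^sup>m\<close> balls of radius \<open>r\<close>. Inside the image of one such ball,
  \<open>P\<^sup>k\<^sup>+\<^sup>1\<close> moves points by at most \<open>\<rho> r\<close>, while \<open>N\<^sup>k\<^sup>+\<^sup>1\<close> moves them inside a ball of
  radius \<open>Q\<^sub>2 r\<close> of \<open>Z\<^sub>k\<close>, which is covered by \<open>\<kappa>\<close> balls of \<open>W\<^sub>k\<close> of radius \<open>\<rho> r\<close>.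
  Hence \<open>B\<^sub>k\<close> is covered by \<open>\<kappa>\<^sup>m\<^sup>+\<^sup>1\<close> balls of radius \<open>2\<rho> r\<close>, and, after moving the
  centres into \<open>B\<^sub>k\<close>, of radius \<open>4\<rho> r\<close>. Starting from one ball of radius \<open>2 Q\<^sub>1\<close> at every
  level, \<open>B\<^sub>0\<close> is covered by \<open>\<kappa>\<^sup>m\<close> balls of radius \<open>2 Q\<^sub>1 (4\<rho>)\<^sup>m\<close> for every \<open>m\<close>, which
  bounds its fractal dimension by \<open>ln \<kappa> / ln (1/(4\<rho>))\<close>.\<close>

lemma normed_subspace_imp_subspace: "normed_subspace V n \<Longrightarrow> subspace V"
  by (simp add: normed_subspace_def)

lemma normed_subspace_nonneg: "normed_subspace V n \<Longrightarrow> x \<in> V \<Longrightarrow> 0 \<le> n x"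
  by (simp add: normed_subspace_def)

lemma normed_subspace_zero: "normed_subspace V n \<Longrightarrow> n 0 = 0"
  using subspace_0[of V] by (simp add: normed_subspace_def)

lemma normed_subspace_scaleR:
  "normed_subspace V n \<Longrightarrow> x \<in> V \<Longrightarrow> n (c *\<^sub>R x) = \<bar>c\<bar> * n x"
  by (simp add: normed_subspace_def)

lemma normed_subspace_add:
  "normed_subspace V n \<Longrightarrow> x \<in> V \<Longrightarrow> y \<in> V \<Longrightarrow> n (x + y) \<le> n x + n y"
  by (simp add: normed_subspace_def)

lemma normed_subspace_minus_commute:
  assumes ns: "normed_subspace V n" and "x \<in> V" "y \<in> V"
  shows "n (x - y) = n (y - x)"
proof -
  have "x - y \<in> V"
    using assms normed_subspace_imp_subspace subspace_diff by blast
  then have "n ((-1) *\<^sub>R (x - y)) = n (x - y)"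
    using normed_subspace_scaleR[OF ns, of "x - y" "-1"] by simp
  then show ?thesis by simp
qed

lemma normed_subspace_triangle:
  assumes ns: "normed_subspace V n" and "x \<in> V" "y \<in> V" "z \<in> V"
  shows "n (x - z) \<le> n (x - y) + n (y - z)"
proof -
  have "x - y \<in> V" "y - z \<in> V"
    using assms normed_subspace_imp_subspace subspace_diff by blast+
  then show ?thesis
    using normed_subspace_add[OF ns, of "x - y" "y - z"] by simp
qed

text \<open>The metric is set to \<open>0\<close> off \<open>V\<close> because \<open>Metric_space\<close> demands
  non-negativity and symmetry on the whole type.\<close>
lemma normed_subspace_Metric_space:
  assumes ns: "normed_subspace V n"
  shows "Metric_space V (\<lambda>x y. if x \<in> V \<and> y \<in> V then n (x - y) else 0)"
proof
  have sub: "subspace V" by (rule normed_subspace_imp_subspace[OF ns])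
  show "0 \<le> (if x \<in> V \<and> y \<in> V then n (x - y) else 0)" for x y
    using normed_subspace_nonneg[OF ns] subspace_diff[OF sub] by simp
  show "(if x \<in> V \<and> y \<in> V then n (x - y) else 0) = (if y \<in> V \<and> x \<in> V then n (y - x) else 0)"
    for x y
    using normed_subspace_minus_commute[OF ns] by auto
  show "(if x \<in> V \<and> y \<in> V then n (x - y) else 0) = 0 \<longleftrightarrow> x = y" if "x \<in> V" "y \<in> V" for x y
    using that subspace_diff[OF sub] ns by (auto simp: normed_subspace_def)
  show "(if x \<in> V \<and> z \<in> V then n (x - z) else 0)
      \<le> (if x \<in> V \<and> y \<in> V then n (x - y) else 0) + (if y \<in> V \<and> z \<in> V then n (y - z) else 0)"
    if "x \<in> V" "y \<in> V" "z \<in> V" for x y z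
    using that normed_subspace_triangle[OF ns] by simp
qed

subsection \<open>Finite nets and covering numbers\<close>

definition finite_net :: "'a::real_vector set \<Rightarrow> ('a \<Rightarrow> real) \<Rightarrow> real \<Rightarrow> 'a set \<Rightarrow> 'a set \<Rightarrow> bool"
  where "finite_net V n r K C \<longleftrightarrow> finite C \<and> C \<subseteq> V \<and> K \<subseteq> (\<Union>c\<in>C. {x\<in>V. n (x - c) \<le> r})"

lemma finite_net_mono_radius:
  assumes "finite_net V n r K C" "r \<le> r'"
  shows "finite_net V n r' K C"
proof -
  have "{x\<in>V. n (x - c) \<le> r} \<subseteq> {x\<in>V. n (x - c) \<le> r'}" for c
    using assms(2) by auto
  then show ?thesis
    using assms(1) unfolding finite_net_def by blast
qed

lemma covering_number_eq_Inf: "covering_number V n r K = Inf {card C | C. finite_net V n r K C}"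
  by (simp add: covering_number_def finite_net_def)

lemma covering_number_le_card: "finite_net V n r K C \<Longrightarrow> covering_number V n r K \<le> card C"
  unfolding covering_number_eq_Inf by (intro cInf_lower) auto

lemma covering_number_attained:
  assumes "finite_net V n r K C"
  shows "\<exists>D. finite_net V n r K D \<and> card D = covering_number V n r K"
proof -
  let ?S = "{card C | C. finite_net V n r K C}"
  have "Inf ?S \<in> ?S"
    using assms by (intro Inf_nat_def1) blast
  then show ?thesis
    unfolding covering_number_eq_Inf by auto
qed

lemma ns_rel_compact_imp_finite_net:
  assumes ns: "normed_subspace V n" and K: "ns_rel_compact V n K" and "0 < e"
  shows "\<exists>C\<subseteq>K. finite_net V n e K C"
proof -
  define d where "d x y = (if x \<in> V \<and> y \<in> V then n (x - y) else 0)" for x y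
  interpret M: Metric_space V d
    unfolding d_def by (rule normed_subspace_Metric_space[OF ns])
  have KV: "K \<subseteq> V"
    using K by (simp add: ns_rel_compact_def)
  have "M.mtotally_bounded K"
    unfolding M.mtotally_bounded_sequentially
  proof (intro conjI allI impI KV)
    fix \<sigma> :: "nat \<Rightarrow> 'a"
    assume "range \<sigma> \<subseteq> K"
    then obtain r l where r: "strict_mono r" and lim: "conv_in V n (\<sigma> \<circ> r) l"
      using K unfolding ns_rel_compact_def by blast
    have range: "range (\<sigma> \<circ> r) \<subseteq> V"
      using \<open>range \<sigma> \<subseteq> K\<close> KV by auto
    then have "limitin M.mtopology (\<sigma> \<circ> r) l sequentially"
      using lim by (force simp: M.limit_metric_sequentially conv_in_def d_def)
    then show "\<exists>r. strict_mono r \<and> M.MCauchy (\<sigma> \<circ> r)"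
      using r M.convergent_imp_MCauchy[OF range] by blast
  qed
  then obtain C where C: "finite C" "C \<subseteq> K" "K \<subseteq> (\<Union>c\<in>C. M.mball c e)"
    using \<open>0 < e\<close> unfolding M.mtotally_bounded_def by (elim allE[of _ e] impE exE conjE)
  have "K \<subseteq> (\<Union>c\<in>C. {x\<in>V. n (x - c) \<le> e})"
    using C(3) by (force simp: d_def normed_subspace_minus_commute[OF ns])
  then show ?thesis
    using C KV unfolding finite_net_def by blast
qed

lemma bounded_imp_singleton_net:
  assumes ns: "normed_subspace V n" and KV: "K \<subseteq> V" and bound: "\<And>x. x \<in> K \<Longrightarrow> n x \<le> Q"
  shows "\<exists>C\<subseteq>K. finite_net V n (2 * Q) K C \<and> card C \<le> 1"
proof (cases "K = {}")
  case True
  then show ?thesis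
    by (auto simp: finite_net_def)
next
  case False
  then obtain c where c: "c \<in> K" by blast
  have "n (x - c) \<le> 2 * Q" if "x \<in> K" for x
  proof -
    have V: "x \<in> V" "0 \<in> V" "c \<in> V"
      using that c KV subspace_0[OF normed_subspace_imp_subspace[OF ns]] by auto
    have "n (x - c) \<le> n (x - 0) + n (0 - c)"
      by (rule normed_subspace_triangle[OF ns V])
    also have "n (0 - c) = n (c - 0)"
      by (rule normed_subspace_minus_commute[OF ns V(2,3)])
    finally show ?thesis
      using bound[OF that] bound[OF c] by simp
  qed
  then show ?thesis
    using c KV by (intro exI[of _ "{c}"]) (auto simp: finite_net_def)
qed

lemma finite_net_recentre:
  assumes ns: "normed_subspace V n" and KV: "K \<subseteq> V" and E: "finite_net V n r K E"
  shows "\<exists>C\<subseteq>K. finite_net V n (2 * r) K C \<and> card C \<le> card E"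
proof -
  define E' where "E' = {e\<in>E. \<exists>y\<in>K. n (y - e) \<le> r}"
  define g where "g e = (SOME y. y \<in> K \<and> n (y - e) \<le> r)" for e
  have g: "g e \<in> K \<and> n (g e - e) \<le> r" if e: "e \<in> E'" for e
  proof -
    obtain y where "y \<in> K" "n (y - e) \<le> r"
      using e unfolding E'_def by blast
    then show ?thesis
      using someI[of "\<lambda>y. y \<in> K \<and> n (y - e) \<le> r" y] unfolding g_def by blast
  qed
  have finE: "finite E" and EV: "E \<subseteq> V"
    using E by (auto simp: finite_net_def)
  have finE': "finite E'" and "E' \<subseteq> E"
    using finE by (auto simp: E'_def)
  have "K \<subseteq> (\<Union>c\<in>g ` E'. {x\<in>V. n (x - c) \<le> 2 * r})"
  proof
    fix x
    assume x: "x \<in> K"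
    then obtain e where e: "e \<in> E" "n (x - e) \<le> r"
      using E by (auto simp: finite_net_def)
    then have "e \<in> E'"
      using x by (auto simp: E'_def)
    have V: "x \<in> V" "e \<in> V" "g e \<in> V"
      using x e(1) EV KV g[OF \<open>e \<in> E'\<close>] by auto
    have "n (x - g e) \<le> n (x - e) + n (e - g e)"
      by (rule normed_subspace_triangle[OF ns V])
    also have "n (e - g e) = n (g e - e)"
      by (rule normed_subspace_minus_commute[OF ns V(2,3)])
    finally have "n (x - g e) \<le> 2 * r"
      using e(2) g[OF \<open>e \<in> E'\<close>] by linarith
    then show "x \<in> (\<Union>c\<in>g ` E'. {x\<in>V. n (x - c) \<le> 2 * r})"
      using \<open>e \<in> E'\<close> V(1) by blast
  qed
  moreover have "g ` E' \<subseteq> K"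
    using g by blast
  moreover have "card (g ` E') \<le> card E"
    using card_image_le[OF finE', of g] card_mono[OF finE \<open>E' \<subseteq> E\<close>] by linarith
  ultimately show ?thesis
    using finE' KV unfolding finite_net_def by blast
qed

lemma unit_ball_net_scaled:
  assumes nsW: "normed_subspace W nW" and nsZ: "normed_subspace Z nZ" and ZW: "Z \<subseteq> W"
    and D: "finite_net W nW \<delta> (unit_ball Z nZ) D"
    and w: "w \<in> Z" "nZ w \<le> s" and "0 < s"
  shows "\<exists>d\<in>D. nW (w - s *\<^sub>R d) \<le> s * \<delta>"
proof -
  define v where "v = (1 / s) *\<^sub>R w"
  have "v \<in> Z"
    unfolding v_def using w(1) normed_subspace_imp_subspace[OF nsZ] subspace_scale by blast
  moreover have "nZ v \<le> 1"
    unfolding v_def using normed_subspace_scaleR[OF nsZ w(1)] w(2) \<open>0 < s\<close> by (simp add: pos_divide_le_eq)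
  ultimately obtain d where d: "d \<in> D" "nW (v - d) \<le> \<delta>"
    using D by (auto simp: finite_net_def unit_ball_def)
  have "d \<in> W"
    using d(1) D by (auto simp: finite_net_def)
  then have "v - d \<in> W"
    using \<open>v \<in> Z\<close> ZW subspace_diff[OF normed_subspace_imp_subspace[OF nsW]] by blast
  moreover have "w - s *\<^sub>R d = s *\<^sub>R (v - d)"
    using \<open>0 < s\<close> by (simp add: v_def algebra_simps)
  ultimately have "nW (w - s *\<^sub>R d) = s * nW (v - d)"
    using normed_subspace_scaleR[OF nsW] \<open>0 < s\<close> by simp
  then show ?thesis
    using d \<open>0 < s\<close> by (metis mult_left_mono less_imp_le)
qed

text \<open>The centre \<open>U c + L r d\<close> serves the image of the \<open>r\<close>-ball about \<open>c\<close>: \<open>P\<close> moves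
  by at most \<open>\<rho> r\<close>, and \<open>N z - N c\<close> lies in the \<open>Z\<close>-ball of radius \<open>L r\<close>, where \<open>L r d\<close> is
  within \<open>L r \<delta>\<close> of it.\<close>
lemma finite_net_image:
  fixes U P N :: "'a::real_vector \<Rightarrow> 'a"
  assumes nsW: "normed_subspace W nW" and nsZ: "normed_subspace Z nZ" and ZW: "Z \<subseteq> W"
    and D: "finite_net W nW \<delta> (unit_ball Z nZ) D"
    and C: "finite_net W' nW' r B' C" and CB': "C \<subseteq> B'"
    and U: "\<And>z. z \<in> B' \<Longrightarrow> U z = P z + N z"
    and P_maps: "\<And>z. z \<in> B' \<Longrightarrow> P z \<in> W" and N_maps: "\<And>z. z \<in> B' \<Longrightarrow> N z \<in> W"
    and P_lip: "\<And>z1 z2. z1 \<in> B' \<Longrightarrow> z2 \<in> B' \<Longrightarrow> nW (P z1 - P z2) \<le> \<rho> * nW' (z1 - z2)"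
    and N_diff: "\<And>z1 z2. z1 \<in> B' \<Longrightarrow> z2 \<in> B' \<Longrightarrow> N z1 - N z2 \<in> Z"
    and N_lip: "\<And>z1 z2. z1 \<in> B' \<Longrightarrow> z2 \<in> B' \<Longrightarrow> nZ (N z1 - N z2) \<le> L * nW' (z1 - z2)"
    and "0 \<le> \<rho>" "0 < L" "0 < r"
  shows "finite_net W nW ((\<rho> + L * \<delta>) * r) (U ` B') ((\<lambda>(c, d). U c + (L * r) *\<^sub>R d) ` (C \<times> D))"
proof -
  have sub: "subspace W" by (rule normed_subspace_imp_subspace[OF nsW])
  have DW: "D \<subseteq> W"
    using D by (simp add: finite_net_def)
  have UW: "U z \<in> W" if "z \<in> B'" for z
    using that U P_maps N_maps subspace_add[OF sub] by simp
  have "\<exists>c\<in>C. \<exists>d\<in>D. nW (U z - (U c + (L * r) *\<^sub>R d)) \<le> (\<rho> + L * \<delta>) * r" if z: "z \<in> B'" for z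
  proof -
    obtain c where c: "c \<in> C" "nW' (z - c) \<le> r"
      using C z by (auto simp: finite_net_def)
    have cB': "c \<in> B'" using c(1) CB' by auto
    have "nZ (N z - N c) \<le> L * r"
      using order_trans[OF N_lip[OF z cB'] mult_left_mono[OF c(2) less_imp_le[OF \<open>0 < L\<close>]]] .
    then obtain d where d: "d \<in> D" "nW (N z - N c - (L * r) *\<^sub>R d) \<le> (L * r) * \<delta>"
      using unit_ball_net_scaled[OF nsW nsZ ZW D N_diff[OF z cB'] _ mult_pos_pos[OF \<open>0 < L\<close> \<open>0 < r\<close>]]
      by blast
    have PW: "P z - P c \<in> W"
      using P_maps[OF z] P_maps[OF cB'] subspace_diff[OF sub] by blast
    have NW: "N z - N c - (L * r) *\<^sub>R d \<in> W"
      using N_diff[OF z cB'] ZW d(1) DW subspace_diff[OF sub] subspace_scale[OF sub] by blast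
    have split: "U z - (U c + (L * r) *\<^sub>R d) = (P z - P c) + (N z - N c - (L * r) *\<^sub>R d)"
      using U[OF z] U[OF cB'] by (simp add: algebra_simps)
    have "nW (U z - (U c + (L * r) *\<^sub>R d)) \<le> nW (P z - P c) + nW (N z - N c - (L * r) *\<^sub>R d)"
      unfolding split by (rule normed_subspace_add[OF nsW PW NW])
    also have "\<dots> \<le> \<rho> * r + (L * r) * \<delta>"
      using P_lip[OF z cB'] mult_left_mono[OF c(2) \<open>0 \<le> \<rho>\<close>] d(2) by linarith
    finally show ?thesis
      using c(1) d(1) by (auto simp: algebra_simps)
  qed
  moreover have "U c + (L * r) *\<^sub>R d \<in> W" if "c \<in> C" "d \<in> D" for c d
    using that CB' DW UW subspace_add[OF sub] subspace_scale[OF sub] by blast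
  ultimately show ?thesis
    using C D UW by (fastforce simp: finite_net_def)
qed

subsection \<open>Fractal dimension from geometrically shrinking nets\<close>

lemma covering_number_le_of_geometric_nets:
  assumes "0 < \<theta>" "\<theta> < 1" "0 < e" "e \<le> R"
    and nets: "\<And>m. \<exists>C. finite_net V n (R * \<theta> ^ m) K C \<and> card C \<le> \<kappa> ^ m"
  shows "\<exists>m. covering_number V n e K \<le> \<kappa> ^ m \<and> real m \<le> ln (R / e) / ln (1 / \<theta>) + 1"
proof -
  define a where "a = ln (1 / \<theta>)"
  define q where "q = ln (R / e) / a"
  define m where "m = nat \<lceil>q\<rceil>"
  have a: "0 < a"
    using assms by (simp add: a_def)
  have q: "0 \<le> q"
    using assms a by (simp add: q_def)
  have m: "q \<le> real m" "real m \<le> q + 1"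
    using ceiling_correct[of q] q by (simp_all add: m_def)
  then have "ln (R / e) \<le> real m * a"
    using a by (simp add: q_def pos_divide_le_eq)
  then have "ln (R * \<theta> ^ m) \<le> ln e"
    using assms by (simp add: ln_mult ln_realpow ln_div a_def algebra_simps)
  then have "R * \<theta> ^ m \<le> e"
    using assms by simp
  then obtain C where "finite_net V n e K C" "card C \<le> \<kappa> ^ m"
    using nets[of m] finite_net_mono_radius by blast
  then have "covering_number V n e K \<le> \<kappa> ^ m"
    using covering_number_le_card order_trans by blast
  with m(2) show ?thesis
    unfolding q_def a_def by blast
qed

lemma fractal_dim_le_of_geometric_nets:
  assumes "0 < R" "0 < \<theta>" "\<theta> < 1" "1 \<le> \<kappa>"
    and nets: "\<And>m. \<exists>C. finite_net V n (R * \<theta> ^ m) K C \<and> card C \<le> \<kappa> ^ m"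
  shows "fractal_dim V n K \<le> ereal (ln (real \<kappa>) / ln (1 / \<theta>))"
proof -
  define a where "a = ln (1 / \<theta>)"
  define L where "L = ln (real \<kappa>) / a"
  define c where "c = ln (real \<kappa>) * (ln R / a + 1)"
  have a: "0 < a" and ln\<kappa>: "0 \<le> ln (real \<kappa>)"
    using assms by (simp_all add: a_def)
  have bound: "ln (real (covering_number V n e K)) / ln (1 / e) \<le> L + c / ln (1 / e)"
    if e: "0 < e" "e < min 1 R" for e
  proof -
    define t where "t = ln (1 / e)"
    have t: "0 < t"
      using e by (simp add: t_def)
    obtain m where m: "covering_number V n e K \<le> \<kappa> ^ m" "real m \<le> ln (R / e) / a + 1"
      using covering_number_le_of_geometric_nets[OF assms(2,3) e(1) _ nets] e(2)
      unfolding a_def by fastforce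
    have "ln (real (covering_number V n e K)) \<le> ln (real (\<kappa> ^ m))"
      using m(1) assms(4) by (cases "covering_number V n e K = 0") auto
    also have "\<dots> = real m * ln (real \<kappa>)"
      using assms(4) by (simp add: ln_realpow)
    also have "\<dots> \<le> (ln (R / e) / a + 1) * ln (real \<kappa>)"
      using m(2) ln\<kappa> by (rule mult_right_mono)
    also have "\<dots> = t * L + c"
      using a e assms(1) by (simp add: L_def c_def t_def ln_div field_simps)
    finally show ?thesis
      using t by (simp add: t_def field_simps)
  qed
  have "filterlim (\<lambda>e::real. ln (1 / e)) at_top (at_right 0)"
    using ln_at_0 by (simp add: ln_inverse filterlim_uminus_at_bot flip: inverse_eq_divide)
  then have "((\<lambda>e. c / ln (1 / e)) \<longlongrightarrow> 0) (at_right 0)"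
    by (intro tendsto_divide_0[OF tendsto_const] filterlim_at_top_imp_at_infinity)
  then have "((\<lambda>e. ereal (L + c / ln (1 / e))) \<longlongrightarrow> ereal L) (at_right (0::real))"
    using tendsto_add[OF tendsto_const, of _ 0 _ L] by (intro tendsto_ereal) simp
  then have lim: "Limsup (at_right 0) (\<lambda>e. ereal (L + c / ln (1 / e))) = ereal L"
    by (intro lim_imp_Limsup) simp_all
  have "\<forall>\<^sub>F e in at_right 0. ereal (ln (real (covering_number V n e K)) / ln (1 / e))
      \<le> ereal (L + c / ln (1 / e))"
    unfolding eventually_at_right_field using bound assms(1) by (intro exI[of _ "min 1 R"]) simp
  then have "fractal_dim V n K \<le> Limsup (at_right 0) (\<lambda>e. ereal (L + c / ln (1 / e)))"
    unfolding fractal_dim_def by (rule Limsup_mono)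
  then show ?thesis
    using lim by (simp add: L_def a_def)
qed

subsection \<open>The tower of compact sets\<close>

locale squeezing_tower =
  fixes W Z B :: "nat \<Rightarrow> 'a::real_vector set"
    and nW nZ :: "nat \<Rightarrow> 'a \<Rightarrow> real"
    and U P N :: "nat \<Rightarrow> 'a \<Rightarrow> 'a"
    and \<rho> Q2 :: real
  assumes W_banach: "\<And>k. banach_space (W k) (nW k)"
    and Z_banach: "\<And>k. banach_space (Z k) (nZ k)"
    and emb: "\<And>k. compactly_embedded (Z k) (nZ k) (W k) (nW k)"
    and kappa_fin: "\<And>\<epsilon>. \<epsilon> > 0 \<Longrightarrow>
        bdd_above (range (\<lambda>k. covering_number (W k) (nW k) \<epsilon> (unit_ball (Z k) (nZ k))))"
    and B_compact: "\<And>k. ns_compact (W k) (nW k) (B k)"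
    and B_bounded: "\<exists>Q1. (\<forall>k. B k \<noteq> {} \<longrightarrow> set_norm (nW k) (B k) \<le> Q1) \<and>
                        (\<forall>k. bdd_above (nW k ` B k))"
    and U_maps: "\<And>k. k \<ge> 1 \<Longrightarrow> U k ` B k = B (k - 1)"
    and P_maps: "\<And>k z. k \<ge> 1 \<Longrightarrow> z \<in> B k \<Longrightarrow> P k z \<in> W (k - 1)"
    and N_maps: "\<And>k z. k \<ge> 1 \<Longrightarrow> z \<in> B k \<Longrightarrow> N k z \<in> W (k - 1)"
    and decomp: "\<And>k z. k \<ge> 1 \<Longrightarrow> z \<in> B k \<Longrightarrow> U k z = P k z + N k z"
    and rho: "0 < \<rho>" "\<rho> < 1/4"
    and Q2: "Q2 > 0"
    and P_lip: "\<And>k z1 z2. k \<ge> 1 \<Longrightarrow> z1 \<in> B k \<Longrightarrow> z2 \<in> B k \<Longrightarrow>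
        nW (k - 1) (P k z1 - P k z2) \<le> \<rho> * nW k (z1 - z2)"
    and N_diff: "\<And>k z1 z2. k \<ge> 1 \<Longrightarrow> z1 \<in> B k \<Longrightarrow> z2 \<in> B k \<Longrightarrow>
        N k z1 - N k z2 \<in> Z (k - 1)"
    and N_lip: "\<And>k z1 z2. k \<ge> 1 \<Longrightarrow> z1 \<in> B k \<Longrightarrow> z2 \<in> B k \<Longrightarrow>
        nZ (k - 1) (N k z1 - N k z2) \<le> Q2 * nW k (z1 - z2)"
begin

lemma W_normed_subspace: "normed_subspace (W k) (nW k)"
  using W_banach by (simp add: banach_space_def)

lemma Z_normed_subspace: "normed_subspace (Z k) (nZ k)"
  using Z_banach by (simp add: banach_space_def)

lemma Z_subset_W: "Z k \<subseteq> W k"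
  using emb by (simp add: compactly_embedded_def)

lemma B_subset_W: "B k \<subseteq> W k"
  using B_compact by (simp add: ns_compact_def)

lemma B_norm_bounded: obtains Q1 where "\<And>k z. z \<in> B k \<Longrightarrow> nW k z \<le> Q1"
proof -
  obtain Q1 where Q1: "\<And>k. B k \<noteq> {} \<Longrightarrow> set_norm (nW k) (B k) \<le> Q1" "\<And>k. bdd_above (nW k ` B k)"
    using B_bounded by blast
  have "nW k z \<le> Q1" if "z \<in> B k" for k z
  proof -
    have "nW k z \<le> set_norm (nW k) (B k)"
      unfolding set_norm_def using that Q1(2) by (intro cSUP_upper)
    also have "\<dots> \<le> Q1"
      using Q1(1) that by blast
    finally show ?thesis .
  qed
  then show thesis by (rule that)
qed

definition kappa :: nat
  where "kappa = (SUP k. covering_number (W k) (nW k) (\<rho> / Q2) (unit_ball (Z k) (nZ k)))"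

lemma unit_ball_net:
  "\<exists>D. finite_net (W k) (nW k) (\<rho> / Q2) (unit_ball (Z k) (nZ k)) D \<and> card D \<le> kappa"
proof -
  have \<delta>: "0 < \<rho> / Q2"
    using rho Q2 by simp
  have "ns_rel_compact (W k) (nW k) (unit_ball (Z k) (nZ k))"
    using emb by (simp add: compactly_embedded_def unit_ball_def)
  then obtain C where "finite_net (W k) (nW k) (\<rho> / Q2) (unit_ball (Z k) (nZ k)) C"
    using ns_rel_compact_imp_finite_net[OF W_normed_subspace _ \<delta>] by blast
  then obtain D where "finite_net (W k) (nW k) (\<rho> / Q2) (unit_ball (Z k) (nZ k)) D"
    and "card D = covering_number (W k) (nW k) (\<rho> / Q2) (unit_ball (Z k) (nZ k))"
    using covering_number_attained by blast
  moreover have "covering_number (W k) (nW k) (\<rho> / Q2) (unit_ball (Z k) (nZ k)) \<le> kappa"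
    unfolding kappa_def using kappa_fin[OF \<delta>] by (intro cSUP_upper) auto
  ultimately show ?thesis by auto
qed

lemma kappa_ge_1: "1 \<le> kappa"
proof -
  obtain D where D: "finite_net (W 0) (nW 0) (\<rho> / Q2) (unit_ball (Z 0) (nZ 0)) D" "card D \<le> kappa"
    using unit_ball_net by blast
  have "0 \<in> unit_ball (Z 0) (nZ 0)"
    using subspace_0[OF normed_subspace_imp_subspace[OF Z_normed_subspace]] normed_subspace_zero[OF Z_normed_subspace]
    by (simp add: unit_ball_def)
  then have "D \<noteq> {}" and "finite D"
    using D(1) by (auto simp: finite_net_def)
  then show ?thesis
    using D(2) card_0_eq by fastforce
qed

lemma B_net_step:
  assumes "0 < r" "C \<subseteq> B (Suc k)" "finite_net (W (Suc k)) (nW (Suc k)) r (B (Suc k)) C"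
  shows "\<exists>C'\<subseteq>B k. finite_net (W k) (nW k) (4 * \<rho> * r) (B k) C' \<and> card C' \<le> card C * kappa"
proof -
  obtain D where D: "finite_net (W k) (nW k) (\<rho> / Q2) (unit_ball (Z k) (nZ k)) D" "card D \<le> kappa"
    using unit_ball_net by blast
  define E where "E = (\<lambda>(c, d). U (Suc k) c + (Q2 * r) *\<^sub>R d) ` (C \<times> D)"
  have "finite_net (W k) (nW k) ((\<rho> + Q2 * (\<rho> / Q2)) * r) (U (Suc k) ` B (Suc k)) E"
    unfolding E_def
    by (rule finite_net_image[OF W_normed_subspace Z_normed_subspace Z_subset_W D(1) assms(3,2)])
      (use decomp[of "Suc k"] P_maps[of "Suc k"] N_maps[of "Suc k"] P_lip[of "Suc k"]
        N_diff[of "Suc k"] N_lip[of "Suc k"] rho Q2 \<open>0 < r\<close> in auto)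
  then have "finite_net (W k) (nW k) (2 * \<rho> * r) (B k) E"
    using U_maps[of "Suc k"] Q2 by simp
  from finite_net_recentre[OF W_normed_subspace B_subset_W this]
  obtain C' where C': "C' \<subseteq> B k" "finite_net (W k) (nW k) (2 * (2 * \<rho> * r)) (B k) C'"
    and "card C' \<le> card E"
    by blast
  have "finite C" "finite D"
    using assms(3) D(1) by (simp_all add: finite_net_def)
  then have "card E \<le> card C * card D"
    unfolding E_def by (metis card_cartesian_product card_image_le finite_cartesian_product)
  also have "\<dots> \<le> card C * kappa"
    using D(2) by simp
  finally have "card C' \<le> card C * kappa"
    using \<open>card C' \<le> card E\<close> by linarith
  then show ?thesis
    using C' by (intro exI[of _ C']) (simp add: mult.assoc)
qed

lemma B_geometric_nets:
  obtains R where "0 < R"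
    "\<And>k m. \<exists>C\<subseteq>B k. finite_net (W k) (nW k) (R * (4 * \<rho>) ^ m) (B k) C \<and> card C \<le> kappa ^ m"
proof -
  obtain Q1 where Q1: "\<And>k z. z \<in> B k \<Longrightarrow> nW k z \<le> Q1"
    using B_norm_bounded by blast
  define R where "R = 2 * max Q1 1"
  have "\<exists>C\<subseteq>B k. finite_net (W k) (nW k) (R * (4 * \<rho>) ^ m) (B k) C \<and> card C \<le> kappa ^ m" for k m
  proof (induction m arbitrary: k)
    case 0
    have "\<And>z. z \<in> B k \<Longrightarrow> nW k z \<le> max Q1 1"
      using Q1 by fastforce
    then show ?case
      using bounded_imp_singleton_net[OF W_normed_subspace B_subset_W] by (simp add: R_def)
  next
    case (Suc m)
    then obtain C where C: "C \<subseteq> B (Suc k)" "card C \<le> kappa ^ m"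
      "finite_net (W (Suc k)) (nW (Suc k)) (R * (4 * \<rho>) ^ m) (B (Suc k)) C"
      by blast
    have "0 < R * (4 * \<rho>) ^ m"
      using rho by (simp add: R_def)
    then obtain C' where C': "C' \<subseteq> B k"
      "finite_net (W k) (nW k) (4 * \<rho> * (R * (4 * \<rho>) ^ m)) (B k) C'" "card C' \<le> card C * kappa"
      using B_net_step C(1,3) by blast
    have "card C' \<le> kappa ^ Suc m"
      using C(2) C'(3) by (simp add: mult.commute order_trans)
    then show ?case
      using C'(1,2) by (intro exI[of _ C']) (simp add: algebra_simps)
  qed
  moreover have "0 < R"
    by (simp add: R_def)
  ultimately show thesis
    using that by blast
qed

lemma fractal_dim_B0_le: "fractal_dim (W 0) (nW 0) (B 0) \<le> ereal (ln (real kappa) / ln (1 / (4 * \<rho>)))"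
proof -
  obtain R where "0 < R"
    and "\<And>m. \<exists>C\<subseteq>B 0. finite_net (W 0) (nW 0) (R * (4 * \<rho>) ^ m) (B 0) C \<and> card C \<le> kappa ^ m"
    using B_geometric_nets by metis
  then show ?thesis
    using rho kappa_ge_1 by (intro fractal_dim_le_of_geometric_nets) auto
qed

end

theorem lemma6p2:
  fixes W Z B :: "nat \<Rightarrow> 'a::real_vector set"
    and nW nZ :: "nat \<Rightarrow> 'a \<Rightarrow> real"
    and U P N :: "nat \<Rightarrow> 'a \<Rightarrow> 'a"
    and \<rho> Q2 :: real
  assumes W_banach: "\<And>k. banach_space (W k) (nW k)"
    and Z_banach: "\<And>k. banach_space (Z k) (nZ k)"
    and emb: "\<And>k. compactly_embedded (Z k) (nZ k) (W k) (nW k)"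
    and kappa_fin: "\<And>\<epsilon>. \<epsilon> > 0 \<Longrightarrow>
        bdd_above (range (\<lambda>k. covering_number (W k) (nW k) \<epsilon> (unit_ball (Z k) (nZ k))))"
    and B_compact: "\<And>k. ns_compact (W k) (nW k) (B k)"
    and B_bounded: "\<exists>Q1. (\<forall>k. B k \<noteq> {} \<longrightarrow> set_norm (nW k) (B k) \<le> Q1) \<and>
                        (\<forall>k. bdd_above (nW k ` B k))"
    and U_maps: "\<And>k. k \<ge> 1 \<Longrightarrow> U k ` B k = B (k - 1)"
    and P_maps: "\<And>k z. k \<ge> 1 \<Longrightarrow> z \<in> B k \<Longrightarrow> P k z \<in> W (k - 1)"
    and N_maps: "\<And>k z. k \<ge> 1 \<Longrightarrow> z \<in> B k \<Longrightarrow> N k z \<in> W (k - 1)"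
    and decomp: "\<And>k z. k \<ge> 1 \<Longrightarrow> z \<in> B k \<Longrightarrow> U k z = P k z + N k z"
    and rho: "0 < \<rho>" "\<rho> < 1/4"
    and Q2: "Q2 > 0"
    and P_lip: "\<And>k z1 z2. k \<ge> 1 \<Longrightarrow> z1 \<in> B k \<Longrightarrow> z2 \<in> B k \<Longrightarrow>
        nW (k - 1) (P k z1 - P k z2) \<le> \<rho> * nW k (z1 - z2)"
    and N_diff: "\<And>k z1 z2. k \<ge> 1 \<Longrightarrow> z1 \<in> B k \<Longrightarrow> z2 \<in> B k \<Longrightarrow>
        N k z1 - N k z2 \<in> Z (k - 1)"
    and N_lip: "\<And>k z1 z2. k \<ge> 1 \<Longrightarrow> z1 \<in> B k \<Longrightarrow> z2 \<in> B k \<Longrightarrow>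
        nZ (k - 1) (N k z1 - N k z2) \<le> Q2 * nW k (z1 - z2)"
  shows "fractal_dim (W 0) (nW 0) (B 0) \<le>
    ereal (log 2 (real (SUP k. covering_number (W k) (nW k) (\<rho> / Q2) (unit_ball (Z k) (nZ k))))
           / log 2 (1 / (4 * \<rho>)))"
proof -
  interpret squeezing_tower W Z B nW nZ U P N \<rho> Q2
    by (rule squeezing_tower.intro) (fact assms)+
  have "log 2 (real kappa) / log 2 (1 / (4 * \<rho>)) = ln (real kappa) / ln (1 / (4 * \<rho>))"
    by (simp add: log_def)
  then show ?thesis
    using fractal_dim_B0_le by (simp add: kappa_def)
qed

end
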